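(* If $C$ is an identifying code of $K_n\times K_m$ with $cs(C)=n-1$ and $rs(C)=m-1$, then no vertex of $C$ is isolated in $C$.
   Context: $K_n\times K_m$ is the direct product of complete graphs: vertex set $[n]\times[m]$, with $(i,r)$ adjacent to $(j,s)$ iff $i\ne j$ and $r \ne s$. An identifying code is a dominating set $C$ with $N[x]\cap C\ne N[y]\cap C$ for all distinct vertices $x,y$ ($N[x]$ the closed neighborhood). Columns: $C_i=\{(i,t):t\in[m]\}$; rows: $R_r=\{(k,r):k\in[n]\}$. $cs(C)$ (resp. $rs(C)$) is the number of columns (resp. rows) meeting $C$. A vertex $v=(i,r)$ is isolated in $C$ if $C\cap C_i=\{v\}$ and $C\cap R_r=\{v\}$. *)

theory Defs
  imports Main
begin

text \<open>Direct product of complete graphs K_n x K_m on vertex set [n] x [m], [n] = {1..n}.\<close>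

definition verts :: "nat \<Rightarrow> nat \<Rightarrow> (nat \<times> nat) set" where
  "verts n m = {1..n} \<times> {1..m}"

definition adj :: "nat \<times> nat \<Rightarrow> nat \<times> nat \<Rightarrow> bool" where
  "adj x y \<longleftrightarrow> fst x \<noteq> fst y \<and> snd x \<noteq> snd y"

definition cnbhd :: "nat \<Rightarrow> nat \<Rightarrow> nat \<times> nat \<Rightarrow> (nat \<times> nat) set" where
  "cnbhd n m x = {y \<in> verts n m. y = x \<or> adj x y}"

definition identifying_code :: "nat \<Rightarrow> nat \<Rightarrow> (nat \<times> nat) set \<Rightarrow> bool" where
  "identifying_code n m C \<longleftrightarrow> C \<subseteq> verts n m
     \<and> (\<forall>x \<in> verts n m. cnbhd n m x \<inter> C \<noteq> {})
     \<and> (\<forall>x \<in> verts n m. \<forall>y \<in> verts n m. x \<noteq> y \<longrightarrow> cnbhd n m x \<inter> C \<noteq> cnbhd n m y \<inter> C)"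

definition col :: "nat \<Rightarrow> nat \<Rightarrow> nat \<Rightarrow> (nat \<times> nat) set" where
  "col n m i = {(i, t) | t. t \<in> {1..m}}"

definition row :: "nat \<Rightarrow> nat \<Rightarrow> nat \<Rightarrow> (nat \<times> nat) set" where
  "row n m r = {(k, r) | k. k \<in> {1..n}}"

definition cs :: "nat \<Rightarrow> nat \<Rightarrow> (nat \<times> nat) set \<Rightarrow> nat" where
  "cs n m C = card {i \<in> {1..n}. col n m i \<inter> C \<noteq> {}}"

definition rs :: "nat \<Rightarrow> nat \<Rightarrow> (nat \<times> nat) set \<Rightarrow> nat" where
  "rs n m C = card {r \<in> {1..m}. row n m r \<inter> C \<noteq> {}}"

definition isolated_in :: "nat \<Rightarrow> nat \<Rightarrow> (nat \<times> nat) set \<Rightarrow> nat \<times> nat \<Rightarrow> bool" where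
  "isolated_in n m C v \<longleftrightarrow> C \<inter> col n m (fst v) = {v} \<and> C \<inter> row n m (snd v) = {v}"

end

theory Submission
  imports Defs
begin

(* Two vertices of K_n x K_m are adjacent iff they differ in both
   coordinates, so a vertex x sees every code vertex as soon as no other code
   vertex shares its column or its row; then N[x] \<inter> C = C.
   Since cs(C) = n - 1 and rs(C) = m - 1, some column a and some row b contain no
   code vertex, so the non-code vertex (a,b) sees all of C.  An isolated code
   vertex v also sees all of C, so v and (a,b) would be distinct vertices with
   the same trace N[.] \<inter> C, contradicting that C is identifying. *)

lemma index_missing_if_card_pred:
  assumes "card {i \<in> {1..n::nat}. P i} = n - 1" and "n \<ge> 1"
  shows "\<exists>a \<in> {1..n}. \<not> P a"
proof (rule ccontr)
  assume "\<not> ?thesis"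
  then have "{i \<in> {1..n}. P i} = {1..n}" by auto
  then show False using assms by simp
qed

lemma cnbhd_inter_eq_code:
  assumes "C \<subseteq> verts n m"
    and "\<And>y. y \<in> C \<Longrightarrow> y \<noteq> x \<Longrightarrow> fst y \<noteq> fst x \<and> snd y \<noteq> snd x"
  shows "cnbhd n m x \<inter> C = C"
  using assms unfolding cnbhd_def adj_def by fastforce

lemma empty_lines_see_code:
  assumes "C \<subseteq> verts n m"
    and "col n m a \<inter> C = {}" and "row n m b \<inter> C = {}"
  shows "cnbhd n m (a, b) \<inter> C = C"
proof (rule cnbhd_inter_eq_code[OF assms(1)])
  fix y assume "y \<in> C"
  moreover obtain i t where "y = (i, t)" "t \<in> {1..m}" "i \<in> {1..n}"
    using \<open>y \<in> C\<close> assms(1) unfolding verts_def by blast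
  ultimately show "fst y \<noteq> fst (a, b) \<and> snd y \<noteq> snd (a, b)"
    using assms(2,3) unfolding col_def row_def by auto
qed

lemma isolated_sees_code:
  assumes "C \<subseteq> verts n m" and "isolated_in n m C v"
  shows "cnbhd n m v \<inter> C = C"
proof (rule cnbhd_inter_eq_code[OF assms(1)])
  fix y assume "y \<in> C" "y \<noteq> v"
  obtain i t where y: "y = (i, t)" "t \<in> {1..m}" "i \<in> {1..n}"
    using \<open>y \<in> C\<close> assms(1) unfolding verts_def by blast
  have "y \<notin> C \<inter> col n m (fst v)" and "y \<notin> C \<inter> row n m (snd v)"
    using assms(2) \<open>y \<noteq> v\<close> unfolding isolated_in_def by auto
  then show "fst y \<noteq> fst v \<and> snd y \<noteq> snd v"
    using \<open>y \<in> C\<close> y unfolding col_def row_def by auto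
qed

theorem mainTheorem11:
  fixes n m :: nat and C :: "(nat \<times> nat) set"
  assumes "identifying_code n m C"
    and "cs n m C = n - 1"
    and "rs n m C = m - 1"
  shows "\<forall>v \<in> C. \<not> isolated_in n m C v"
proof (intro ballI notI)
  fix v assume "v \<in> C" and iso: "isolated_in n m C v"
  have sub: "C \<subseteq> verts n m" using assms(1) unfolding identifying_code_def by blast
  have v: "v \<in> verts n m" using sub \<open>v \<in> C\<close> by blast
  then have "n \<ge> 1" and "m \<ge> 1" unfolding verts_def by auto
  obtain a where a: "a \<in> {1..n}" "col n m a \<inter> C = {}"
    using index_missing_if_card_pred[OF assms(2)[unfolded cs_def] \<open>n \<ge> 1\<close>] by auto
  obtain b where b: "b \<in> {1..m}" "row n m b \<inter> C = {}"
    using index_missing_if_card_pred[OF assms(3)[unfolded rs_def] \<open>m \<ge> 1\<close>] by auto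
  have ab: "(a, b) \<in> verts n m" using a b unfolding verts_def by auto
  have "(a, b) \<notin> C" using a b unfolding col_def by auto
  then have "v \<noteq> (a, b)" using \<open>v \<in> C\<close> by auto
  then have "cnbhd n m v \<inter> C \<noteq> cnbhd n m (a, b) \<inter> C"
    using assms(1) v ab unfolding identifying_code_def by blast
  moreover have "cnbhd n m v \<inter> C = cnbhd n m (a, b) \<inter> C"
    using isolated_sees_code[OF sub iso] empty_lines_see_code[OF sub a(2) b(2)] by simp
  ultimately show False by contradiction
qed

end
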